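(* Let $\mathcal G$ be the game induced by an SG-LCS, let $x\in\{0,1\}$ and $T\subseteq S$, and let $(R_i)$ be the sequence defining $\mathrm{Force}^x(\mathcal G,T)$. Then there exists a finite $j\in\mathbb N$ such that $R_i=R_j$ for all $i\ge j$ (in particular $\mathrm{Force}^x(\mathcal G,T)=R_j$).
   Context: An SG-LCS is a tuple $\mathcal L=(\mathtt S,\mathtt S^0,\mathtt S^1,\mathtt C,\mathtt M,\mathtt T,\lambda,\mathrm{Col})$: $\mathtt S$ is a finite set of control states partitioned into $\mathtt S^0,\mathtt S^1$; $\mathtt C$ a finite set of channels; $\mathtt M$ a finite message alphabet; $\mathtt T$ a finite set of transitions $\mathtt s\xrightarrow{op}\mathtt s'$ with $op$ one of $c!m$ (send $m\in\mathtt M$ on $c\in\mathtt C$), $c?m$ (receive $m$ from $c$), or $\mathtt{nop}$; $0<\lambda<1$ the loss rate; $\mathrm{Col}:\mathtt S\to\{0,\dots,n\}$. The induced game $\mathcal G=(S,S^0,S^1,S^R,\to,P,\mathrm{Col})$ has configurations $S=\mathtt S\times(\mathtt M^* )^{\mathtt C}\times\{0,1\}$, random states $S^R=\mathtt S\times(\mathtt M^* )^{\mathtt C}\times\{0\}$, $S^x=\mathtt S^x\times(\mathtt M^* )^{\mathtt C}\times\{1\}$. Transitions: $(\mathtt s,\mathtt x,1)\to(\mathtt s',\mathtt x',0)$ iff there is $\mathtt s\xrightarrow{op}\mathtt s'$ in $\mathtt T$ with: $\mathtt x'=\mathtt x$ if $op=\mathtt{nop}$; $\mathtt x'=\mathtt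 x[c\mapsto \mathtt x(c)\cdot m]$ if $op=c!m$; $\mathtt x(c)=m\cdot w$ and $\mathtt x'=\mathtt x[c\mapsto w]$ if $op=c?m$; if $(\mathtt s,\mathtt x,1)$ has no such successor, it gets the single transition $(\mathtt s,\mathtt x,1)\to(\mathtt s,\mathtt x,0)$. For words, $u\preceq v$ iff $u$ is obtained by deleting zero or more letters of $v$; extended componentwise to channel contents. Random transitions: $(\mathtt s,\mathtt x,0)\to(\mathtt s,\mathtt x',1)$ for every $\mathtt x'\preceq\mathtt x$, with positive probability (each message lost independently with probability $\lambda$). Write $\mathrm{Pre}(Q)=\{s:\exists s'\in Q,\ s\to s'\}$, $\widetilde{\mathrm{Pre}}(Q)=S\setminus\mathrm{Pre}(S\setminus Q)$. Force sets: for $x\in\{0,1\}$ and $T\subseteq S$ let $R_0=T$, $R_{\alpha+1}=R_\alpha\cup(S^R\cap\mathrm{Pre}(R_\alpha))\cup(S^x\cap\mathrm{Pre}(R_\alpha))\cup(S^{1-x}\cap\widetilde{\mathrm{Pre}}(R_\alpha))$, $R_\lambda=\bigcup_{\alpha<\lambda}R_\alpha$ for limit ordinals $\lambda$; with $\gamma$ the least ordinal such that $R_{\gamma+1}=R_\gamma$, set $\mathrm{Force}^x(\mathcal G,T)=R_\gamma$. *)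

theory Defs
  imports Complex_Main "HOL-Library.Sublist"
begin

datatype ('c, 'm) op = Send 'c 'm | Recv 'c 'm | Nop

record ('s, 'c, 'm) sglcs =
  st   :: "'s set"
  st0  :: "'s set"
  st1  :: "'s set"
  chans :: "'c set"
  msgs :: "'m set"
  trans :: "('s \<times> ('c, 'm) op \<times> 's) set"
  loss :: real
  col  :: "'s \<Rightarrow> nat"
  maxcol :: nat

definition op_ok :: "('s, 'c, 'm) sglcs \<Rightarrow> ('c, 'm) op \<Rightarrow> bool" where
  "op_ok L op = (case op of Send c m \<Rightarrow> c \<in> chans L \<and> m \<in> msgs L
                          | Recv c m \<Rightarrow> c \<in> chans L \<and> m \<in> msgs L
                          | Nop \<Rightarrow> True)"

definition wf_sglcs :: "('s, 'c, 'm) sglcs \<Rightarrow> bool" where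
  "wf_sglcs L \<longleftrightarrow>
     finite (st L) \<and> st0 L \<inter> st1 L = {} \<and> st0 L \<union> st1 L = st L \<and>
     finite (chans L) \<and> finite (msgs L) \<and> finite (trans L) \<and>
     (\<forall>(s, op, s') \<in> trans L. s \<in> st L \<and> s' \<in> st L \<and> op_ok L op) \<and>
     0 < loss L \<and> loss L < 1 \<and>
     (\<forall>s \<in> st L. col L s \<le> maxcol L)"

text \<open>Configurations: control state, channel contents (a word over the message
alphabet for each channel; channels outside \<open>chans L\<close> are fixed to the empty
word), and a bit in {0,1} (0 = random configuration).\<close>

type_synonym ('s, 'c, 'm) conf = "'s \<times> ('c \<Rightarrow> 'm list) \<times> nat"

definition valid_contents :: "('s, 'c, 'm) sglcs \<Rightarrow> ('c \<Rightarrow> 'm list) \<Rightarrow> bool" where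
  "valid_contents L x \<longleftrightarrow> (\<forall>c. (c \<in> chans L \<longrightarrow> set (x c) \<subseteq> msgs L) \<and> (c \<notin> chans L \<longrightarrow> x c = []))"

definition confs :: "('s, 'c, 'm) sglcs \<Rightarrow> ('s, 'c, 'm) conf set" where
  "confs L = {(s, x, b). s \<in> st L \<and> valid_contents L x \<and> b \<in> {0, 1}}"

definition rand_confs :: "('s, 'c, 'm) sglcs \<Rightarrow> ('s, 'c, 'm) conf set" where
  "rand_confs L = {(s, x, b). s \<in> st L \<and> valid_contents L x \<and> b = 0}"

definition player_confs :: "('s, 'c, 'm) sglcs \<Rightarrow> nat \<Rightarrow> ('s, 'c, 'm) conf set" where
  "player_confs L p = {(s, x, b). s \<in> (if p = 0 then st0 L else st1 L) \<and> valid_contents L x \<and> b = 1}"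

definition op_step :: "('c, 'm) op \<Rightarrow> ('c \<Rightarrow> 'm list) \<Rightarrow> ('c \<Rightarrow> 'm list) \<Rightarrow> bool" where
  "op_step op x x' = (case op of
      Nop \<Rightarrow> x' = x
    | Send c m \<Rightarrow> x' = x(c := x c @ [m])
    | Recv c m \<Rightarrow> (\<exists>w. x c = m # w \<and> x' = x(c := w)))"

definition sub_contents :: "('c \<Rightarrow> 'm list) \<Rightarrow> ('c \<Rightarrow> 'm list) \<Rightarrow> bool" where
  "sub_contents x' x \<longleftrightarrow> (\<forall>c. subseq (x' c) (x c))"

definition ctrl_succ :: "('s, 'c, 'm) sglcs \<Rightarrow> 's \<Rightarrow> ('c \<Rightarrow> 'm list) \<Rightarrow> 's \<Rightarrow> ('c \<Rightarrow> 'm list) \<Rightarrow> bool" where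
  "ctrl_succ L s x s' x' \<longleftrightarrow> (\<exists>op. (s, op, s') \<in> trans L \<and> op_step op x x')"

definition edge :: "('s, 'c, 'm) sglcs \<Rightarrow> ('s, 'c, 'm) conf \<Rightarrow> ('s, 'c, 'm) conf \<Rightarrow> bool" where
  "edge L u v \<longleftrightarrow> u \<in> confs L \<and> v \<in> confs L \<and>
     (case (u, v) of ((s, x, b), (s', x', b')) \<Rightarrow>
        (b = 1 \<and> b' = 0 \<and>
           (ctrl_succ L s x s' x' \<or>
            ((\<nexists>s'' x''. ctrl_succ L s x s'' x'') \<and> s' = s \<and> x' = x)))
      \<or> (b = 0 \<and> b' = 1 \<and> s' = s \<and> sub_contents x' x))"

definition Pre :: "('s, 'c, 'm) sglcs \<Rightarrow> ('s, 'c, 'm) conf set \<Rightarrow> ('s, 'c, 'm) conf set" where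
  "Pre L Q = {u \<in> confs L. \<exists>v \<in> Q. edge L u v}"

definition tPre :: "('s, 'c, 'm) sglcs \<Rightarrow> ('s, 'c, 'm) conf set \<Rightarrow> ('s, 'c, 'm) conf set" where
  "tPre L Q = confs L - Pre L (confs L - Q)"

definition force_step :: "('s, 'c, 'm) sglcs \<Rightarrow> nat \<Rightarrow> ('s, 'c, 'm) conf set \<Rightarrow> ('s, 'c, 'm) conf set" where
  "force_step L p R = R \<union> (rand_confs L \<inter> Pre L R) \<union> (player_confs L p \<inter> Pre L R)
                         \<union> (player_confs L (1 - p) \<inter> tPre L R)"

definition force_seq :: "('s, 'c, 'm) sglcs \<Rightarrow> nat \<Rightarrow> ('s, 'c, 'm) conf set \<Rightarrow> nat \<Rightarrow> ('s, 'c, 'm) conf set" where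
  "force_seq L p T i = (force_step L p ^^ i) T"

text \<open>The force set: the limit of the (transfinite, inflationary, monotone) iteration,
i.e. the least set containing \<open>T\<close> and closed under \<open>force_step\<close>.\<close>
definition Force :: "('s, 'c, 'm) sglcs \<Rightarrow> nat \<Rightarrow> ('s, 'c, 'm) conf set \<Rightarrow> ('s, 'c, 'm) conf set" where
  "Force L p T = \<Inter>{R. T \<subseteq> R \<and> force_step L p R \<subseteq> R}"

end

theory Submission
  imports Defs "HOL-Library.Infinite_Set" "HOL-Library.Ramsey"
begin

text \<open>Order random configurations by equality of control states and componentwise
  subword embedding of channel contents; by Higman's lemma every infinite sequence of them
  contains an ascending pair. Because messages can be lost, the random predecessors
  \<open>rand_confs L \<inter> Pre L R\<close> of any set are upward closed, so along the increasing
  stages \<open>R\<^sub>i\<close> they form an increasing chain of upward closed sets, which must become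
  stationary, say from \<open>k\<close> on. Player configurations only have random successors, so
  their membership in \<open>R\<^sub>i\<^sub>+\<^sub>1\<close> depends only on the random part of \<open>R\<^sub>i\<close>;
  hence \<open>R\<^sub>k\<^sub>+\<^sub>2\<close> is already a fixed point, and it is the least one.\<close>

section \<open>Higman's lemma\<close>

lemma finite_range_constant_subseq:
  fixes g :: "nat \<Rightarrow> 'a"
  assumes "finite (range g)"
  obtains r :: "nat \<Rightarrow> nat" where "strict_mono r" and "\<And>i. g (r i) = g (r 0)"
proof -
  obtain y where "infinite (g -` {y})"
    using inf_img_fin_dom[OF assms infinite_UNIV_nat] by blast
  then obtain r :: "nat \<Rightarrow> nat" where "strict_mono r" "\<And>i. r i \<in> g -` {y}"
    using infinite_enumerate by blast
  then show thesis using that by simp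
qed

definition bad_seq :: "(nat \<Rightarrow> 'a list) \<Rightarrow> bool" where
  "bad_seq f \<longleftrightarrow> (\<forall>i j. i < j \<longrightarrow> \<not> subseq (f i) (f j))"

definition bad_prefix :: "'a set \<Rightarrow> 'a list list \<Rightarrow> bool" where
  "bad_prefix A ws \<longleftrightarrow>
     (\<exists>f. (\<forall>i. set (f i) \<subseteq> A) \<and> bad_seq f \<and> (\<forall>i<length ws. f i = ws ! i))"

text \<open>Nash-Williams' minimal bad sequence: each term is a shortest word that keeps
  the prefix chosen so far extendable to a bad sequence.\<close>
fun min_bad_prefix :: "'a set \<Rightarrow> nat \<Rightarrow> 'a list list" where
  "min_bad_prefix A 0 = []"
| "min_bad_prefix A (Suc n) =
     min_bad_prefix A n @ [arg_min length (\<lambda>w. bad_prefix A (min_bad_prefix A n @ [w]))]"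

definition min_bad_seq :: "'a set \<Rightarrow> nat \<Rightarrow> 'a list" where
  "min_bad_seq A n = min_bad_prefix A (Suc n) ! n"

lemma length_min_bad_prefix [simp]: "length (min_bad_prefix A n) = n"
  by (induction n) auto

lemma min_bad_prefix_eq_map: "min_bad_prefix A n = map (min_bad_seq A) [0..<n]"
  by (induction n) (simp_all add: min_bad_seq_def nth_append)

lemma bad_prefix_min_bad_prefix:
  assumes "bad_prefix A []"
  shows "bad_prefix A (min_bad_prefix A n)"
proof (induction n)
  case 0
  then show ?case using assms by simp
next
  case (Suc n)
  then obtain f where f: "\<forall>i. set (f i) \<subseteq> A" "bad_seq f" "\<forall>i<n. f i = min_bad_prefix A n ! i"
    unfolding bad_prefix_def by auto
  have "bad_prefix A (min_bad_prefix A n @ [f n])"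
    unfolding bad_prefix_def using f by (intro exI[of _ f]) (auto simp: nth_append less_Suc_eq)
  then have "bad_prefix A (min_bad_prefix A n @
                [arg_min length (\<lambda>w. bad_prefix A (min_bad_prefix A n @ [w]))])"
    by (rule arg_min_natI[where P = "\<lambda>w. bad_prefix A (min_bad_prefix A n @ [w])"])
  then show ?case by simp
qed

lemma min_bad_seq_minimal:
  assumes "bad_prefix A (map (min_bad_seq A) [0..<n] @ [v])"
  shows "length (min_bad_seq A n) \<le> length v"
proof -
  have "min_bad_seq A n = arg_min length (\<lambda>w. bad_prefix A (min_bad_prefix A n @ [w]))"
    by (simp add: min_bad_seq_def nth_append)
  also have "length \<dots> \<le> length v"
    by (rule arg_min_nat_le) (use assms in \<open>simp only: min_bad_prefix_eq_map\<close>)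
  finally show ?thesis .
qed

lemma min_bad_seq_agrees:
  assumes "bad_prefix A []"
  obtains f where "\<And>i. set (f i) \<subseteq> A" and "bad_seq f" and "\<And>i. i < n \<Longrightarrow> f i = min_bad_seq A i"
  using bad_prefix_min_bad_prefix[OF assms, of n]
  unfolding bad_prefix_def min_bad_prefix_eq_map by force

lemma min_bad_seq_bad:
  assumes "bad_prefix A []"
  shows "bad_seq (min_bad_seq A)" and "set (min_bad_seq A i) \<subseteq> A"
proof -
  show "bad_seq (min_bad_seq A)"
    unfolding bad_seq_def
  proof (intro allI impI)
    fix i j :: nat assume "i < j"
    obtain f where f: "\<And>k. set (f k) \<subseteq> A" "bad_seq f" "\<And>k. k < Suc j \<Longrightarrow> f k = min_bad_seq A k"
      using min_bad_seq_agrees[OF assms, where n = "Suc j"] by auto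
    have "\<not> subseq (f i) (f j)"
      using f(2) \<open>i < j\<close> unfolding bad_seq_def by blast
    then show "\<not> subseq (min_bad_seq A i) (min_bad_seq A j)"
      using f(3)[of i] f(3)[of j] \<open>i < j\<close> by simp
  qed
  obtain f where f: "\<And>k. set (f k) \<subseteq> A" "bad_seq f" "\<And>k. k < Suc i \<Longrightarrow> f k = min_bad_seq A k"
    using min_bad_seq_agrees[OF assms, where n = "Suc i"] by auto
  show "set (min_bad_seq A i) \<subseteq> A"
    using f(1)[of i] f(3)[of i] by simp
qed

text \<open>Nash-Williams' shortened sequence, whose badness contradicts minimality.\<close>
lemma bad_seq_splice_tl:
  assumes bad: "bad_seq m" and ne: "\<And>i. m i \<noteq> []"
    and r: "strict_mono r" and hd: "\<And>i. hd (m (r i)) = hd (m (r 0))"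
  shows "bad_seq (\<lambda>j. if j < r 0 then m j else tl (m (r (j - r 0))))"
proof -
  have tl_emb: "subseq u (tl (m k)) \<Longrightarrow> subseq u (m k)" for u k
    using ne[of k] by (cases "m k") auto
  have tl_tl_emb: "subseq (tl (m (r i))) (tl (m (r j))) \<Longrightarrow> subseq (m (r i)) (m (r j))" for i j
    using ne[of "r i"] ne[of "r j"] hd[of i] hd[of j]
    by (cases "m (r i)"; cases "m (r j)") auto
  show ?thesis
    unfolding bad_seq_def
  proof (intro allI impI)
    fix i j :: nat assume "i < j"
    consider "j < r 0" | "i < r 0" "r 0 \<le> j" | "r 0 \<le> i"
      by linarith
    then show "\<not> subseq (if i < r 0 then m i else tl (m (r (i - r 0))))
                          (if j < r 0 then m j else tl (m (r (j - r 0))))"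
    proof cases
      case 1
      then show ?thesis using bad \<open>i < j\<close> unfolding bad_seq_def by simp
    next
      case 2
      have "r 0 \<le> r (j - r 0)" using r by (simp add: strict_mono_less_eq)
      then have "i < r (j - r 0)" using 2 by linarith
      then have "\<not> subseq (m i) (m (r (j - r 0)))"
        using bad unfolding bad_seq_def by blast
      then show ?thesis using tl_emb 2 by auto
    next
      case 3
      have "r (i - r 0) < r (j - r 0)"
        using r 3 \<open>i < j\<close> by (simp add: strict_mono_less)
      then have "\<not> subseq (m (r (i - r 0))) (m (r (j - r 0)))"
        using bad unfolding bad_seq_def by blast
      then show ?thesis using tl_tl_emb 3 \<open>i < j\<close> by auto
    qed
  qed
qed

theorem higman:
  fixes f :: "nat \<Rightarrow> 'a list"
  assumes "finite A" and "\<And>i. set (f i) \<subseteq> A"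
  shows "\<exists>i j. i < j \<and> subseq (f i) (f j)"
proof (rule ccontr)
  assume "\<not> ?thesis"
  then have "bad_prefix A []"
    unfolding bad_prefix_def bad_seq_def using assms(2) by (intro exI[of _ f]) auto
  define m where "m = min_bad_seq A"
  note m_bad = min_bad_seq_bad[OF \<open>bad_prefix A []\<close>, folded m_def]
  have ne: "m i \<noteq> []" for i
  proof -
    have "\<not> subseq (m i) (m (Suc i))"
      using m_bad(1) unfolding bad_seq_def by blast
    then show ?thesis by auto
  qed
  have "range (\<lambda>i. hd (m i)) \<subseteq> A"
    using m_bad(2) hd_in_set[OF ne] by blast
  then have "finite (range (\<lambda>i. hd (m i)))"
    using assms(1) by (rule finite_subset)
  then obtain r :: "nat \<Rightarrow> nat" where r: "strict_mono r" "\<And>i. hd (m (r i)) = hd (m (r 0))"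
    using finite_range_constant_subseq by blast
  define g where "g = (\<lambda>j. if j < r 0 then m j else tl (m (r (j - r 0))))"
  have "set (g j) \<subseteq> A" for j
  proof (cases "j < r 0")
    case False
    have "set (tl (m (r (j - r 0)))) \<subseteq> set (m (r (j - r 0)))"
      by (cases "m (r (j - r 0))") auto
    then show ?thesis using False m_bad(2) unfolding g_def by auto
  qed (use m_bad(2) in \<open>simp add: g_def\<close>)
  moreover have "bad_seq g"
    unfolding g_def using bad_seq_splice_tl[OF m_bad(1) ne r] .
  moreover have "g i = (map m [0..<r 0] @ [tl (m (r 0))]) ! i" if "i < Suc (r 0)" for i
    using that unfolding g_def by (cases "i < r 0") (simp_all add: nth_append)
  ultimately have "bad_prefix A (map m [0..<r 0] @ [tl (m (r 0))])"
    unfolding bad_prefix_def by (intro exI[of _ g]) simp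
  then have "length (m (r 0)) \<le> length (tl (m (r 0)))"
    unfolding m_def by (rule min_bad_seq_minimal)
  then show False
    using ne[of "r 0"] by (cases "m (r 0)") auto
qed

section \<open>Random configurations are well-quasi-ordered\<close>

text \<open>Ramsey's theorem for pairs, colouring \<open>{i, j}\<close> by whether \<open>f i\<close> embeds into
  \<open>f j\<close>: by Higman's lemma the infinite homogeneous set cannot be bad.\<close>
lemma higman_ascending_subseq:
  fixes f :: "nat \<Rightarrow> 'a list"
  assumes "finite A" and "\<And>i. set (f i) \<subseteq> A"
  obtains r :: "nat \<Rightarrow> nat"
  where "strict_mono r" and "\<And>i j. i < j \<Longrightarrow> subseq (f (r i)) (f (r j))"
proof -
  define colour where
    "colour X = (if subseq (f (Min X)) (f (Max X)) then 0 else 1 :: nat)" for X :: "nat set"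
  have "\<forall>x\<in>UNIV. \<forall>y\<in>UNIV. x \<noteq> y \<longrightarrow> colour {x, y} < 2"
    by (simp add: colour_def)
  from Ramsey2[OF infinite_UNIV_nat this] obtain Y t
    where "infinite Y" and homogeneous: "\<forall>x\<in>Y. \<forall>y\<in>Y. x \<noteq> y \<longrightarrow> colour {x, y} = t"
    by blast
  then obtain r :: "nat \<Rightarrow> nat" where r: "strict_mono r" "\<And>i. r i \<in> Y"
    using infinite_enumerate by blast
  have colour_r: "colour {r i, r j} = (if subseq (f (r i)) (f (r j)) then 0 else 1)" if "i < j" for i j
    using strict_monoD[OF r(1) that] unfolding colour_def by simp
  have homogeneous_r: "colour {r i, r j} = t" if "i < j" for i j
    using homogeneous r strict_monoD[OF r(1) that] by simp
  obtain i j where "i < j" "subseq (f (r i)) (f (r j))"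
    using higman[OF assms(1), of "f \<circ> r"] assms(2) by auto
  then have "t = 0"
    using colour_r homogeneous_r by simp
  then show thesis
    using that[OF r(1)] colour_r homogeneous_r by (metis zero_neq_one)
qed

lemma contents_ascending_subseq:
  fixes x :: "nat \<Rightarrow> 'c \<Rightarrow> 'a list"
  assumes "finite C" and "finite A" and "\<And>i c. c \<in> C \<Longrightarrow> set (x i c) \<subseteq> A"
  shows "\<exists>r::nat \<Rightarrow> nat. strict_mono r \<and>
           (\<forall>i j. i < j \<longrightarrow> (\<forall>c\<in>C. subseq (x (r i) c) (x (r j) c)))"
  using assms(1,3)
proof (induction C rule: finite_induct)
  case empty
  then show ?case by (intro exI[of _ id]) (simp add: strict_mono_def)
next
  case (insert c C)
  then obtain r :: "nat \<Rightarrow> nat" where r: "strict_mono r"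
    "\<forall>i j. i < j \<longrightarrow> (\<forall>c\<in>C. subseq (x (r i) c) (x (r j) c))"
    by auto
  obtain r' :: "nat \<Rightarrow> nat" where r': "strict_mono r'"
    "\<And>i j. i < j \<Longrightarrow> subseq (x (r (r' i)) c) (x (r (r' j)) c)"
    using higman_ascending_subseq[OF assms(2), of "\<lambda>i. x (r i) c"] insert.prems by auto
  have "strict_mono (r \<circ> r')"
    using r(1) r'(1) by (simp add: strict_mono_def)
  moreover have "\<forall>i j. i < j \<longrightarrow> (\<forall>c'\<in>insert c C. subseq (x ((r \<circ> r') i) c') (x ((r \<circ> r') j) c'))"
    using r(2) r'(2) strict_monoD[OF r'(1)] by auto
  ultimately show ?case by blast
qed

fun conf_le :: "('s, 'c, 'm) conf \<Rightarrow> ('s, 'c, 'm) conf \<Rightarrow> bool" where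
  "conf_le (s, x, b) (s', x', b') \<longleftrightarrow> s = s' \<and> sub_contents x x' \<and> b = b'"

lemma good_rand_conf_seq:
  fixes a :: "nat \<Rightarrow> ('s, 'c, 'm) conf"
  assumes wf: "wf_sglcs L" and a: "\<And>i. a i \<in> rand_confs L"
  shows "\<exists>i j. i < j \<and> conf_le (a i) (a j)"
proof -
  have fin: "finite (st L)" "finite (chans L)" "finite (msgs L)"
    using wf unfolding wf_sglcs_def by auto
  define s where "s i = fst (a i)" for i
  define x where "x i = fst (snd (a i))" for i
  have a_eq: "a i = (s i, x i, 0)" and s: "s i \<in> st L" and x: "valid_contents L (x i)" for i
    using a[of i] unfolding rand_confs_def s_def x_def by auto
  have "finite (range s)"
    using s by (intro finite_subset[OF _ fin(1)]) auto
  then obtain r :: "nat \<Rightarrow> nat" where r: "strict_mono r" "\<And>i. s (r i) = s (r 0)"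
    using finite_range_constant_subseq by blast
  obtain r' :: "nat \<Rightarrow> nat" where r': "strict_mono r'"
    "\<forall>i j. i < j \<longrightarrow> (\<forall>c\<in>chans L. subseq (x (r (r' i)) c) (x (r (r' j)) c))"
    using contents_ascending_subseq[OF fin(2,3), of "\<lambda>i. x (r i)"] x
    unfolding valid_contents_def by blast
  have "sub_contents (x (r (r' 0))) (x (r (r' 1)))"
    unfolding sub_contents_def
  proof
    fix c
    show "subseq (x (r (r' 0)) c) (x (r (r' 1)) c)"
      using r'(2) x unfolding valid_contents_def by (cases "c \<in> chans L") auto
  qed
  moreover have "r (r' 0) < r (r' 1)"
    using r(1) r'(1) by (simp add: strict_mono_less)
  ultimately show ?thesis
    using r(2)[of "r' 0"] r(2)[of "r' 1"] a_eq by (intro exI conjI) auto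
qed

lemma upclosed_chain_stabilises:
  fixes U :: "nat \<Rightarrow> 'a set"
  assumes good: "\<And>a :: nat \<Rightarrow> 'a. (\<And>i. a i \<in> S) \<Longrightarrow> \<exists>i j. i < j \<and> le (a i) (a j)"
    and chain: "\<And>i. U i \<subseteq> U (Suc i)" and sub: "\<And>i. U i \<subseteq> S"
    and upclosed: "\<And>i u v. u \<in> U i \<Longrightarrow> v \<in> S \<Longrightarrow> le u v \<Longrightarrow> v \<in> U i"
  shows "\<exists>k. \<forall>i\<ge>k. U i = U k"
proof (cases "finite {i. U (Suc i) \<noteq> U i}")
  case True
  then obtain k where "{i. U (Suc i) \<noteq> U i} \<subseteq> {..<k}"
    using finite_nat_bounded[OF True] by blast
  then have k: "\<And>i. U (Suc i) \<noteq> U i \<Longrightarrow> i < k"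
    by auto
  have "U i = U k" if "k \<le> i" for i
    using that
  proof (induction rule: dec_induct)
    case (step n)
    then show ?case using k[of n] by auto
  qed simp
  then show ?thesis by blast
next
  case False
  obtain r :: "nat \<Rightarrow> nat" where r: "strict_mono r" "\<And>n. U (Suc (r n)) \<noteq> U (r n)"
    using infinite_enumerate[OF False] by blast
  have "\<forall>n. \<exists>u. u \<in> U (Suc (r n)) - U (r n)"
    using r(2) chain by blast
  from choice[OF this] obtain a where a: "\<forall>n. a n \<in> U (Suc (r n)) - U (r n)"
    by blast
  then have "a n \<in> S" for n
    using sub by blast
  then obtain i j where "i < j" "le (a i) (a j)"
    using good[of a] by blast
  have "Suc (r i) \<le> r j"
    using strict_monoD[OF r(1) \<open>i < j\<close>] by simp
  then have "U (Suc (r i)) \<subseteq> U (r j)"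
    by (rule lift_Suc_mono_le[of U, OF chain])
  then have "a i \<in> U (r j)"
    using a by blast
  then have "a j \<in> U (r j)"
    using upclosed \<open>le (a i) (a j)\<close> \<open>\<And>n. a n \<in> S\<close> by blast
  then show ?thesis
    using a by blast
qed

section \<open>Stabilisation of the force iteration\<close>

lemma Pre_mono: "A \<subseteq> B \<Longrightarrow> Pre L A \<subseteq> Pre L B"
  unfolding Pre_def by blast

lemma tPre_mono: "A \<subseteq> B \<Longrightarrow> tPre L A \<subseteq> tPre L B"
  unfolding tPre_def Pre_def by blast

lemma force_step_mono: "A \<subseteq> B \<Longrightarrow> force_step L p A \<subseteq> force_step L p B"
  unfolding force_step_def using Pre_mono tPre_mono by blast

lemma force_step_increasing: "R \<subseteq> force_step L p R"
  unfolding force_step_def by blast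

lemma force_seq_0 [simp]: "force_seq L p T 0 = T"
  by (simp add: force_seq_def)

lemma force_seq_Suc [simp]: "force_seq L p T (Suc i) = force_step L p (force_seq L p T i)"
  by (simp add: force_seq_def)

lemma force_seq_mono: "i \<le> j \<Longrightarrow> force_seq L p T i \<subseteq> force_seq L p T j"
  by (rule lift_Suc_mono_le[of "force_seq L p T"]) (simp_all add: force_step_increasing)

lemma force_seq_subset_prefixpoint:
  assumes "T \<subseteq> R" and "force_step L p R \<subseteq> R"
  shows "force_seq L p T i \<subseteq> R"
proof (induction i)
  case (Suc i)
  have "force_step L p (force_seq L p T i) \<subseteq> force_step L p R"
    by (rule force_step_mono[OF Suc.IH])
  then show ?case
    using assms(2) by auto
qed (simp add: assms(1))

lemma force_seq_stationary:
  assumes closed: "force_step L p (force_seq L p T j) \<subseteq> force_seq L p T j"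
  shows "(\<forall>i\<ge>j. force_seq L p T i = force_seq L p T j) \<and> Force L p T = force_seq L p T j"
proof
  have fixpoint: "force_step L p (force_seq L p T j) = force_seq L p T j"
    using closed force_step_increasing by (rule subset_antisym)
  have "force_seq L p T i = force_seq L p T j" if "j \<le> i" for i
    using that by (induction rule: dec_induct) (simp_all add: fixpoint)
  then show "\<forall>i\<ge>j. force_seq L p T i = force_seq L p T j"
    by blast
  show "Force L p T = force_seq L p T j"
  proof
    show "Force L p T \<subseteq> force_seq L p T j"
      unfolding Force_def
      by (rule Inter_lower) (use closed force_seq_mono[of 0 j L p T] in simp)
    show "force_seq L p T j \<subseteq> Force L p T"
      unfolding Force_def using force_seq_subset_prefixpoint[of T _ L p j] by blast
  qed
qed

lemma edge_from_player_conf: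
  assumes "u \<in> player_confs L q" and "edge L u v"
  shows "v \<in> rand_confs L"
  using assms unfolding player_confs_def rand_confs_def edge_def confs_def
  by (auto split: prod.splits)

lemma player_Pre_cong:
  assumes "R \<inter> rand_confs L = R' \<inter> rand_confs L"
  shows "player_confs L q \<inter> Pre L R = player_confs L q \<inter> Pre L R'"
    and "player_confs L q \<inter> tPre L R = player_confs L q \<inter> tPre L R'"
  using edge_from_player_conf[of _ L q] assms unfolding tPre_def Pre_def by blast+

text \<open>Message losses from a larger channel content reach every content reachable from a
  smaller one, so the random predecessors of any set are upward closed.\<close>
lemma rand_Pre_upclosed:
  assumes u: "u \<in> rand_confs L \<inter> Pre L R" and v: "v \<in> rand_confs L" and "conf_le u v"
  shows "v \<in> rand_confs L \<inter> Pre L R"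
proof -
  obtain s x y where uv: "u = (s, x, 0)" "v = (s, y, 0)" "sub_contents x y"
    using u v \<open>conf_le u v\<close> unfolding rand_confs_def by auto
  obtain s' x' b' where w: "(s', x', b') \<in> R" "edge L u (s', x', b')"
    using u unfolding Pre_def by auto
  have "sub_contents x' y"
    using w(2) uv(3) unfolding edge_def uv sub_contents_def
    by (auto intro: subseq_order.order_trans)
  then have "edge L v (s', x', b')"
    using w(2) v unfolding edge_def uv rand_confs_def confs_def by auto
  then show ?thesis
    using w(1) v unfolding Pre_def rand_confs_def confs_def by auto
qed

text \<open>Successors of player configurations are random, so once a step adds no random
  configurations, the next step adds nothing at all.\<close>
lemma force_step_closed:
  assumes "rand_confs L \<inter> Pre L (force_step L p R) \<subseteq> R"
  shows "force_step L p (force_step L p R) \<subseteq> force_step L p R"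
proof -
  let ?R' = "force_step L p R"
  have disj: "player_confs L q \<inter> rand_confs L = {}" for q
    unfolding player_confs_def rand_confs_def by auto
  have "?R' \<inter> rand_confs L \<subseteq> R \<union> rand_confs L \<inter> Pre L R"
    using disj unfolding force_step_def by blast
  moreover have "rand_confs L \<inter> Pre L R \<subseteq> R"
    using assms Pre_mono[OF force_step_increasing] by blast
  ultimately have "?R' \<inter> rand_confs L = R \<inter> rand_confs L"
    using force_step_increasing by blast
  then show ?thesis
    using assms player_Pre_cong[of ?R' L R] force_step_increasing[of R L p]
    unfolding force_step_def[of L p ?R'] by (auto simp: force_step_def)
qed

lemma rand_Pre_force_seq_stabilises:
  fixes L :: "('s, 'c, 'm) sglcs"
  assumes "wf_sglcs L"
  shows "\<exists>k. \<forall>i\<ge>k. rand_confs L \<inter> Pre L (force_seq L p T i)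
                    = rand_confs L \<inter> Pre L (force_seq L p T k)"
proof (rule upclosed_chain_stabilises)
  show "\<exists>i j. i < j \<and> conf_le (a i) (a j)"
    if "\<And>i. a i \<in> rand_confs L" for a :: "nat \<Rightarrow> ('s, 'c, 'm) conf"
    using good_rand_conf_seq[OF assms that] .
  show "rand_confs L \<inter> Pre L (force_seq L p T i)
          \<subseteq> rand_confs L \<inter> Pre L (force_seq L p T (Suc i))" for i
    using Pre_mono[OF force_seq_mono[of i "Suc i" L p T], of L] by auto
  show "v \<in> rand_confs L \<inter> Pre L (force_seq L p T i)"
    if "u \<in> rand_confs L \<inter> Pre L (force_seq L p T i)" "v \<in> rand_confs L" "conf_le u v"
    for i u v
    using rand_Pre_upclosed that .
qed blast

theorem mainTheorem11:
  fixes L :: "('s, 'c, 'm) sglcs" and p :: nat and T :: "('s, 'c, 'm) conf set"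
  assumes "wf_sglcs L" and "p \<in> {0, 1}" and "T \<subseteq> confs L"
  shows "\<exists>j::nat. (\<forall>i\<ge>j. force_seq L p T i = force_seq L p T j) \<and> Force L p T = force_seq L p T j"
proof -
  let ?R = "force_seq L p T"
  obtain k where k: "\<forall>i\<ge>k. rand_confs L \<inter> Pre L (?R i) = rand_confs L \<inter> Pre L (?R k)"
    using rand_Pre_force_seq_stabilises[OF assms(1)] by blast
  have "rand_confs L \<inter> Pre L (force_step L p (?R (Suc k))) \<subseteq> ?R (Suc k)"
    using k[rule_format, of "Suc (Suc k)"] by (auto simp: force_step_def)
  then have "force_step L p (?R (Suc (Suc k))) \<subseteq> ?R (Suc (Suc k))"
    by (simp add: force_step_closed)
  then show ?thesis
    using force_seq_stationary by blast
qed

end
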